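(* For each integer $n\geq 2$, the Kneser graph $K(n,2)$ satisfies $\operatorname{tww}(K(n,2))=\operatorname{lb}_1(K(n,2))$, and this value equals $2(n-3)$ if $n\geq 5$ and $0$ otherwise.
   Context: All graphs are finite and simple. The Kneser graph $K(n,2)$ has vertex set the 2-element subsets of $\{1,\dots,n\}$, two vertices being adjacent iff they are disjoint. A trigraph is a graph whose edges are each colored red or black; a graph is viewed as a trigraph with all edges black; the red degree of a vertex is the number of red edges incident to it. For a partition $\mathcal{P}$ of $V(G)$, the quotient trigraph $G/\mathcal{P}$ has vertex set $\mathcal{P}$; two distinct parts $U,W$ are joined by a black edge if every pair $\{u,w\}$ with $u\in U,w\in W$ is a black edge of $G$, are non-adjacent if no such pair is an edge, and are joined by a red edge otherwise. A contraction sequence of an $N$-vertex trigraph $G$ is a sequence $\mathcal{P}_N,\dots,\mathcal{P}_1$ of partitions of $V(G)$ where $\mathcal{P}_N$ is the partition into singletons and each $\mathcal{P}_i$ arises from $\mathcal{P}_{i+1}$ by merging two parts; its width is the maximum red degree over all $G/\mathcal{P}_i$, and $\operatorname{tww}(G)$ is the minimum width of a contraction sequence. For $|V(G)|\geq 2$, $\operatorname{lb}_1(G)$ is the minimum over all 2-element subsets $\{u,v\}\subseteq V(G)$ of the maximum red degree of $G/\mathcal{P}$ where $\mathcal{P}$ has $\{u,v\}$ as its only non-singleton part; $\operatorname{lb}_1(G)=0$ if $|V(G)|=1$. *)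

theory Defs
  imports Main "HOL-Library.Disjoint_Sets"
begin

text \<open>A (simple) graph is given by a finite vertex set V and a symmetric irreflexive
adjacency relation E; as a trigraph all its edges are black.\<close>

definition red_adj :: "('a \<Rightarrow> 'a \<Rightarrow> bool) \<Rightarrow> 'a set \<Rightarrow> 'a set \<Rightarrow> bool" where
  "red_adj E U W \<longleftrightarrow> U \<noteq> W \<and> (\<exists>u\<in>U. \<exists>w\<in>W. E u w) \<and> \<not> (\<forall>u\<in>U. \<forall>w\<in>W. E u w)"

definition red_deg :: "('a \<Rightarrow> 'a \<Rightarrow> bool) \<Rightarrow> 'a set set \<Rightarrow> 'a set \<Rightarrow> nat" where
  "red_deg E P U = card {W \<in> P. red_adj E U W}"

definition max_red_deg :: "('a \<Rightarrow> 'a \<Rightarrow> bool) \<Rightarrow> 'a set set \<Rightarrow> nat" where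
  "max_red_deg E P = Max (insert 0 (red_deg E P ` P))"

definition singletons :: "'a set \<Rightarrow> 'a set set" where
  "singletons V = (\<lambda>x. {x}) ` V"

definition merge_step :: "'a set set \<Rightarrow> 'a set set \<Rightarrow> bool" where
  "merge_step P Q \<longleftrightarrow> (\<exists>A\<in>P. \<exists>B\<in>P. A \<noteq> B \<and> Q = insert (A \<union> B) (P - {A, B}))"

text \<open>A contraction sequence P_N, ..., P_1 as a list [P_N, ..., P_1] with N = |V|.\<close>
definition contraction_seq :: "'a set \<Rightarrow> 'a set set list \<Rightarrow> bool" where
  "contraction_seq V Ps \<longleftrightarrow> length Ps = card V \<and> length Ps > 0 \<and> Ps ! 0 = singletons V
     \<and> (\<forall>i. Suc i < length Ps \<longrightarrow> merge_step (Ps ! i) (Ps ! Suc i))"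

definition seq_width :: "('a \<Rightarrow> 'a \<Rightarrow> bool) \<Rightarrow> 'a set set list \<Rightarrow> nat" where
  "seq_width E Ps = Max ((\<lambda>P. max_red_deg E P) ` set Ps)"

definition tww :: "'a set \<Rightarrow> ('a \<Rightarrow> 'a \<Rightarrow> bool) \<Rightarrow> nat" where
  "tww V E = (LEAST w. \<exists>Ps. contraction_seq V Ps \<and> seq_width E Ps = w)"

definition pair_partition :: "'a set \<Rightarrow> 'a \<Rightarrow> 'a \<Rightarrow> 'a set set" where
  "pair_partition V u v = insert {u, v} (singletons (V - {u, v}))"

definition lb1 :: "'a set \<Rightarrow> ('a \<Rightarrow> 'a \<Rightarrow> bool) \<Rightarrow> nat" where
  "lb1 V E = (if card V \<le> 1 then 0 else
     Min {max_red_deg E (pair_partition V u v) | u v. u \<in> V \<and> v \<in> V \<and> u \<noteq> v})"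

definition kneser2_V :: "nat \<Rightarrow> nat set set" where
  "kneser2_V n = {S. S \<subseteq> {1..n} \<and> card S = 2}"

definition kneser2_E :: "nat set \<Rightarrow> nat set \<Rightarrow> bool" where
  "kneser2_E S T \<longleftrightarrow> S \<noteq> T \<and> S \<inter> T = {}"

end

(*
  Upper bounds come from explicit contraction sequences, each produced by an invariant that
  some merge preserves.  For n <= 4 every pair has at most one neighbour in K(n,2), namely its
  complement in {1..n}; merging each pair with its neighbour and then merging unions of such
  components never creates a red edge, so the twin-width is 0.

  For n >= 5 the sequence runs through stages (m, D) with 2 <= m < n and D a subset of
  {1..<m}: a pair {a, b} with a < b lies in the part Top if m <= a, in the part Star a if
  a < m < b or (b = m and a in D), and forms a singleton part otherwise.  Stage (n - 1, {})
  is the discrete partition; adding i to D merges {i, m} into Star i, and once D = {1..<m},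
  merging Star (m - 1) into Top yields stage (m - 1, {}).  A part can only be red to Top, to
  the stars and to the singletons {j, m}, at most 2(n - 3) parts; at stage m = 2 only three
  parts are left, and they are merged arbitrarily.

  Conversely lb1 <= tww, since the first merge of a contraction sequence produces a pair
  partition.  After merging u and v, the new part is red to every singleton {y, x} with y in
  the symmetric difference of u and v and x outside u and v, which gives at least 2(n - 3)
  red neighbours when n >= 5.
*)

theory Submission
  imports Defs
begin

inductive contracts_within :: "('a \<Rightarrow> 'a \<Rightarrow> bool) \<Rightarrow> nat \<Rightarrow> 'a set set \<Rightarrow> bool"
  for E w where
  one_part: "card P = 1 \<Longrightarrow> max_red_deg E P \<le> w \<Longrightarrow> contracts_within E w P"
| merge: "merge_step P Q \<Longrightarrow> max_red_deg E P \<le> w \<Longrightarrow> contracts_within E w Q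
    \<Longrightarrow> contracts_within E w P"

lemma max_red_deg_le:
  assumes "finite P" "\<And>U. U \<in> P \<Longrightarrow> red_deg E P U \<le> w"
  shows "max_red_deg E P \<le> w"
  unfolding max_red_deg_def using assms by (simp add: Max_le_iff)

lemma red_deg_le_max_red_deg:
  assumes "finite P" "U \<in> P"
  shows "red_deg E P U \<le> max_red_deg E P"
  unfolding max_red_deg_def using assms by (simp add: Max_ge_iff)

lemma red_deg_le_card:
  assumes "finite P" "U \<in> P"
  shows "red_deg E P U \<le> card P - 1"
proof -
  have "{W \<in> P. red_adj E U W} \<subseteq> P - {U}" unfolding red_adj_def by auto
  then have "red_deg E P U \<le> card (P - {U})"
    unfolding red_deg_def using assms by (intro card_mono) auto
  then show ?thesis using assms by simp
qed

lemma max_red_deg_le_card: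
  assumes "finite P"
  shows "max_red_deg E P \<le> card P - 1"
  using red_deg_le_card[OF assms] by (intro max_red_deg_le[OF assms])

lemma merge_stepI:
  "A \<in> P \<Longrightarrow> B \<in> P \<Longrightarrow> A \<noteq> B \<Longrightarrow> merge_step P (insert (A \<union> B) (P - {A, B}))"
  unfolding merge_step_def by blast

lemma merge_step_exists:
  assumes "2 \<le> card P"
  shows "\<exists>Q. merge_step P Q"
proof -
  have "finite P" using assms by (simp add: card_ge_0_finite)
  then obtain A B where "A \<in> P" "B \<in> P" "A \<noteq> B"
    using assms card_le_Suc0_iff_eq[of P] by auto
  then show ?thesis by (blast intro: merge_stepI)
qed

lemma merge_step_parts:
  assumes "merge_step P Q" "U \<in> Q"
  shows "U \<in> P \<or> (\<exists>A\<in>P. \<exists>B\<in>P. U = A \<union> B)"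
  using assms unfolding merge_step_def by blast

lemma partition_on_merge_step:
  assumes "partition_on V P" "merge_step P Q"
  shows "partition_on V Q"
proof -
  obtain A B where AB: "A \<in> P" "B \<in> P" "Q = insert (A \<union> B) (P - {A, B})"
    using assms(2) unfolding merge_step_def by blast
  have disj: "disjoint P" using assms(1) by (rule partition_onD2)
  have "disjnt (A \<union> B) C" if "C \<in> P - {A, B}" for C
    using that AB(1,2) disjointD[OF disj, of A C] disjointD[OF disj, of B C]
    by (auto simp: disjnt_def)
  moreover have "disjoint (P - {A, B})" using disj by (rule pairwise_subset) blast
  ultimately have "disjoint Q" unfolding AB(3) by (auto simp: pairwise_insert disjnt_sym)
  moreover have "\<Union>Q = V" using AB partition_onD1[OF assms(1)] by auto
  moreover have "{} \<notin> Q" using AB partition_onD3[OF assms(1)] by auto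
  ultimately show ?thesis by (simp add: partition_on_def)
qed

lemma card_merge_step:
  assumes "partition_on V P" "finite P" "merge_step P Q"
  shows "card Q = card P - 1"
proof -
  obtain A B where AB: "A \<in> P" "B \<in> P" "A \<noteq> B" "Q = insert (A \<union> B) (P - {A, B})"
    using assms(3) unfolding merge_step_def by blast
  have ne: "A \<noteq> {}" using AB(1) partition_onD3[OF assms(1)] by blast
  have "A \<union> B \<notin> P - {A, B}"
  proof
    assume "A \<union> B \<in> P - {A, B}"
    then obtain C where C: "C \<in> P" "C \<noteq> A" "A \<subseteq> C" by blast
    then have "A \<inter> C = {}" using AB(1) disjointD[OF partition_onD2[OF assms(1)]] by blast
    then show False using C(3) ne by blast
  qed
  then have "card Q = Suc (card (P - {A, B}))"
    using AB(4) assms(2) by simp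
  moreover have "card (P - {A, B}) = card P - 2"
    using AB(1-3) assms(2) by (simp add: card_Diff_subset)
  moreover have "2 \<le> card P"
    using AB(1-3) assms(2) card_mono[of P "{A, B}"] by simp
  ultimately show ?thesis by linarith
qed

lemma partition_on_part_unique:
  assumes "partition_on V P" "A \<in> P" "B \<in> P" "x \<in> A" "x \<in> B"
  shows "A = B"
  using disjointD[OF partition_onD2[OF assms(1)] assms(2,3)] assms(4,5) by blast

lemma partition_on_singletons_of: "partition_on V (singletons V)"
  unfolding singletons_def by (rule partition_on_singletons)

lemma card_singletons: "card (singletons V) = card V"
  unfolding singletons_def by (simp add: card_image)

lemma contracts_within_by_invariant:
  assumes "finite V" "V \<noteq> {}"
    and step: "\<And>P. \<Phi> P \<Longrightarrow> partition_on V P \<Longrightarrow> 2 \<le> card P \<Longrightarrow> \<exists>Q. merge_step P Q \<and> \<Phi> Q"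
    and width: "\<And>P. \<Phi> P \<Longrightarrow> partition_on V P \<Longrightarrow> max_red_deg E P \<le> w"
  shows "\<Phi> P \<Longrightarrow> partition_on V P \<Longrightarrow> contracts_within E w P"
proof (induction "card P" arbitrary: P rule: less_induct)
  case less
  have "finite P" using assms(1) less.prems(2) by (rule finite_elements)
  moreover have "P \<noteq> {}" using partition_onD1[OF less.prems(2)] assms(2) by auto
  ultimately have "1 \<le> card P" by (simp add: Suc_leI card_gt_0_iff)
  show ?case
  proof (cases "card P = 1")
    case True
    then show ?thesis using width less.prems by (blast intro: contracts_within.one_part)
  next
    case False
    then have "2 \<le> card P" using \<open>1 \<le> card P\<close> by simp
    then obtain Q where Q: "merge_step P Q" "\<Phi> Q"
      using step less.prems by blast
    have "partition_on V Q" using less.prems(2) Q(1) by (rule partition_on_merge_step)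
    moreover have "card Q < card P"
      using card_merge_step[OF less.prems(2) \<open>finite P\<close> Q(1)] \<open>1 \<le> card P\<close> by simp
    ultimately have "contracts_within E w Q" using less.hyps Q(2) by blast
    then show ?thesis using Q(1) width less.prems by (blast intro: contracts_within.merge)
  qed
qed

lemma contracts_within_card_le:
  assumes "finite V" "V \<noteq> {}" "partition_on V P" "card P \<le> Suc w"
  shows "contracts_within E w P"
proof (rule contracts_within_by_invariant[OF assms(1,2), where \<Phi> = "\<lambda>P. card P \<le> Suc w"])
  fix P assume P: "card P \<le> Suc w" "partition_on V P" "2 \<le> card P"
  then obtain Q where Q: "merge_step P Q" using merge_step_exists by blast
  have "finite P" using assms(1) P(2) by (rule finite_elements)
  then have "card Q \<le> Suc w" using card_merge_step[OF P(2) _ Q] P(1) by simp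
  then show "\<exists>Q. merge_step P Q \<and> card Q \<le> Suc w" using Q by blast
next
  fix P assume P: "card P \<le> Suc w" "partition_on V P"
  have "finite P" using assms(1) P(2) by (rule finite_elements)
  then show "max_red_deg E P \<le> w" using max_red_deg_le_card[of P E] P(1) by linarith
qed (simp_all add: assms(3,4))

lemma contracts_within_imp_merge_list:
  assumes "contracts_within E w P" "partition_on V P" "finite V"
  shows "\<exists>Ps. length Ps = card P \<and> Ps \<noteq> [] \<and> Ps ! 0 = P
     \<and> (\<forall>i. Suc i < length Ps \<longrightarrow> merge_step (Ps ! i) (Ps ! Suc i))
     \<and> (\<forall>Q\<in>set Ps. max_red_deg E Q \<le> w)"
  using assms
proof (induction rule: contracts_within.induct)
  case (one_part P)
  then show ?case by (intro exI[of _ "[P]"]) auto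
next
  case (merge P Q)
  have "finite P" using merge.prems finite_elements by blast
  have "partition_on V Q" using merge.prems(1) merge.hyps(1) by (rule partition_on_merge_step)
  then obtain Ps where Ps: "length Ps = card Q" "Ps \<noteq> []" "Ps ! 0 = Q"
      "\<forall>i. Suc i < length Ps \<longrightarrow> merge_step (Ps ! i) (Ps ! Suc i)"
      "\<forall>Q\<in>set Ps. max_red_deg E Q \<le> w"
    using merge.IH merge.prems(2) by blast
  have "card Q = card P - 1"
    using merge.prems(1) \<open>finite P\<close> merge.hyps(1) by (rule card_merge_step)
  then have "length (P # Ps) = card P" using Ps(1,2) by (cases Ps) auto
  moreover have "merge_step ((P # Ps) ! i) ((P # Ps) ! Suc i)" if "Suc i < length (P # Ps)" for i
    using that Ps(3,4) merge.hyps(1) by (cases i) auto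
  ultimately show ?case using Ps(5) merge.hyps(2) by (intro exI[of _ "P # Ps"]) auto
qed

lemma contraction_seq_if_contracts_within:
  assumes "finite V" "contracts_within E w (singletons V)"
  shows "\<exists>Ps. contraction_seq V Ps \<and> seq_width E Ps \<le> w"
proof -
  obtain Ps where Ps: "length Ps = card V" "Ps \<noteq> []" "Ps ! 0 = singletons V"
      "\<forall>i. Suc i < length Ps \<longrightarrow> merge_step (Ps ! i) (Ps ! Suc i)"
      "\<forall>Q\<in>set Ps. max_red_deg E Q \<le> w"
    using contracts_within_imp_merge_list[OF assms(2) partition_on_singletons_of assms(1)]
    unfolding card_singletons by blast
  moreover have "0 < length Ps" using Ps(2) by simp
  ultimately have "contraction_seq V Ps"
    unfolding contraction_seq_def by simp
  moreover have "seq_width E Ps \<le> w"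
    unfolding seq_width_def using Ps(2,5) by simp
  ultimately show ?thesis by blast
qed

lemma tww_le_if_contracts_within:
  assumes "finite V" "contracts_within E w (singletons V)"
  shows "tww V E \<le> w"
  using contraction_seq_if_contracts_within[OF assms] unfolding tww_def
  by (metis (mono_tags, lifting) Least_le order_trans)

lemma contraction_seq_exists:
  assumes "finite V" "V \<noteq> {}"
  shows "\<exists>Ps. contraction_seq V Ps"
proof -
  have "contracts_within E (card V) (singletons V)" for E :: "'a \<Rightarrow> 'a \<Rightarrow> bool"
    using assms partition_on_singletons_of
    by (rule contracts_within_card_le) (simp add: card_singletons)
  then show ?thesis using contraction_seq_if_contracts_within assms(1) by blast
qed

lemma merge_step_singletons:
  assumes "merge_step (singletons V) Q"
  obtains u v where "u \<in> V" "v \<in> V" "u \<noteq> v" "Q = pair_partition V u v"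
proof -
  obtain A B where AB: "A \<in> singletons V" "B \<in> singletons V" "A \<noteq> B"
      "Q = insert (A \<union> B) (singletons V - {A, B})"
    using assms unfolding merge_step_def by blast
  obtain u v where "u \<in> V" "v \<in> V" "A = {u}" "B = {v}"
    using AB(1,2) unfolding singletons_def by blast
  then have "u \<in> V" "v \<in> V" "u \<noteq> v" "Q = insert {u, v} (singletons V - {{u}, {v}})"
    using AB(3,4) by auto
  moreover have "singletons V - {{u}, {v}} = singletons (V - {u, v})"
    unfolding singletons_def by auto
  ultimately show thesis using that by (simp add: pair_partition_def)
qed

lemma finite_pair_partition_widths:
  assumes "finite V"
  shows "finite {max_red_deg E (pair_partition V u v) | u v. u \<in> V \<and> v \<in> V \<and> u \<noteq> v}"
  by (rule finite_subset[of _ "(\<lambda>(u, v). max_red_deg E (pair_partition V u v)) ` (V \<times> V)"])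
    (use assms in auto)

lemma lb1_le_pair_partition:
  assumes "finite V" "u \<in> V" "v \<in> V" "u \<noteq> v"
  shows "lb1 V E \<le> max_red_deg E (pair_partition V u v)"
proof -
  have "2 \<le> card V"
    using assms card_mono[of V "{u, v}"] by auto
  then show ?thesis
    unfolding lb1_def using assms finite_pair_partition_widths[OF assms(1)]
    by (auto intro: Min_le)
qed

lemma le_lb1I:
  assumes "finite V" "2 \<le> card V"
    and "\<And>u v. u \<in> V \<Longrightarrow> v \<in> V \<Longrightarrow> u \<noteq> v \<Longrightarrow> k \<le> max_red_deg E (pair_partition V u v)"
  shows "k \<le> lb1 V E"
proof -
  let ?W = "{max_red_deg E (pair_partition V u v) | u v. u \<in> V \<and> v \<in> V \<and> u \<noteq> v}"
  obtain u v where "u \<in> V" "v \<in> V" "u \<noteq> v"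
    using assms(2) card_le_Suc0_iff_eq[of V] assms(1) by auto
  then have "?W \<noteq> {}" by blast
  moreover have "\<forall>d \<in> ?W. k \<le> d" using assms(3) by blast
  ultimately show ?thesis
    unfolding lb1_def using assms(2) finite_pair_partition_widths[OF assms(1)]
    by (simp add: Min_ge_iff)
qed

lemma lb1_le_tww:
  assumes "finite V" "V \<noteq> {}"
  shows "lb1 V E \<le> tww V E"
proof (cases "card V \<le> 1")
  case True
  then show ?thesis by (simp add: lb1_def)
next
  case False
  obtain Ps where Ps: "contraction_seq V Ps" "seq_width E Ps = tww V E"
    using LeastI_ex[of "\<lambda>w. \<exists>Ps. contraction_seq V Ps \<and> seq_width E Ps = w"]
      contraction_seq_exists[OF assms] unfolding tww_def by blast
  then have "Suc 0 < length Ps" "Ps ! 0 = singletons V"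
    using False unfolding contraction_seq_def by auto
  moreover have "merge_step (Ps ! 0) (Ps ! Suc 0)"
    using Ps(1) \<open>Suc 0 < length Ps\<close> unfolding contraction_seq_def by blast
  ultimately have "merge_step (singletons V) (Ps ! 1)" by simp
  then obtain u v where uv: "u \<in> V" "v \<in> V" "u \<noteq> v" "Ps ! 1 = pair_partition V u v"
    using merge_step_singletons by metis
  have "lb1 V E \<le> max_red_deg E (Ps ! 1)"
    using lb1_le_pair_partition[OF assms(1) uv(1-3)] uv(4) by simp
  also have "\<dots> \<le> seq_width E Ps"
    using \<open>Suc 0 < length Ps\<close> unfolding seq_width_def by (intro Max_ge) auto
  finally show ?thesis using Ps(2) by simp
qed

definition adj_closed :: "'a set \<Rightarrow> ('a \<Rightarrow> 'a \<Rightarrow> bool) \<Rightarrow> 'a set \<Rightarrow> bool" where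
  "adj_closed V E U \<longleftrightarrow> (\<forall>u\<in>U. \<forall>x\<in>V. E u x \<longrightarrow> x \<in> U)"

definition singleton_or_closed_parts :: "'a set \<Rightarrow> ('a \<Rightarrow> 'a \<Rightarrow> bool) \<Rightarrow> 'a set set \<Rightarrow> bool" where
  "singleton_or_closed_parts V E P \<longleftrightarrow> (\<forall>U\<in>P. (\<exists>s. U = {s}) \<or> adj_closed V E U)"

lemma adj_closed_Un: "adj_closed V E A \<Longrightarrow> adj_closed V E B \<Longrightarrow> adj_closed V E (A \<union> B)"
  unfolding adj_closed_def by blast

lemma adj_closed_edge:
  assumes sym: "\<And>u v. E u v \<Longrightarrow> E v u"
    and deg: "\<And>u x y. u \<in> V \<Longrightarrow> x \<in> V \<Longrightarrow> y \<in> V \<Longrightarrow> E u x \<Longrightarrow> E u y \<Longrightarrow> x = y"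
    and "s \<in> V" "t \<in> V" "E s t"
  shows "adj_closed V E {s, t}"
  unfolding adj_closed_def
proof (intro ballI impI)
  fix u x assume "u \<in> {s, t}" "x \<in> V" "E u x"
  then consider "E s x" | "E t x" by auto
  then show "x \<in> {s, t}"
  proof cases
    case 1
    then show ?thesis using deg[OF \<open>s \<in> V\<close> \<open>x \<in> V\<close> \<open>t \<in> V\<close>] \<open>E s t\<close> by simp
  next
    case 2
    then show ?thesis using deg[OF \<open>t \<in> V\<close> \<open>x \<in> V\<close> \<open>s \<in> V\<close>] sym[OF \<open>E s t\<close>] by simp
  qed
qed

lemma not_red_adj_if_adj_closed:
  assumes P: "partition_on V P" "U \<in> P" "W \<in> P"
    and sym: "\<And>u v. E u v \<Longrightarrow> E v u"
    and U: "(\<exists>s. U = {s}) \<or> adj_closed V E U"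
    and W: "(\<exists>t. W = {t}) \<or> adj_closed V E W"
  shows "\<not> red_adj E U W"
proof
  assume red: "red_adj E U W"
  then obtain u w where uw: "u \<in> U" "w \<in> W" "E u w" and "U \<noteq> W"
    unfolding red_adj_def by blast
  then have disj: "U \<inter> W = {}" using P disjointD[OF partition_onD2[OF P(1)]] by blast
  have V: "u \<in> V" "w \<in> V" using uw P partition_onD1[OF P(1)] by blast+
  have "\<not> adj_closed V E U" using disj uw V unfolding adj_closed_def by blast
  moreover have "\<not> adj_closed V E W" using disj uw V sym unfolding adj_closed_def by blast
  ultimately obtain s t where "U = {s}" "W = {t}" using U W by blast
  then show False using red unfolding red_adj_def by blast
qed

lemma max_red_deg_singleton_or_closed_parts:
  assumes "finite V" "partition_on V P" "singleton_or_closed_parts V E P"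
    and sym: "\<And>u v. E u v \<Longrightarrow> E v u"
  shows "max_red_deg E P \<le> 0"
proof (rule max_red_deg_le)
  show "finite P" using assms(1,2) by (rule finite_elements)
  fix U assume U: "U \<in> P"
  note parts = assms(3)[unfolded singleton_or_closed_parts_def, rule_format]
  have "\<not> red_adj E U W" if "W \<in> P" for W
    using not_red_adj_if_adj_closed[OF assms(2) U that sym parts[OF U] parts[OF that]] .
  then have "{W \<in> P. red_adj E U W} = {}" by blast
  then show "red_deg E P U \<le> 0" unfolding red_deg_def by (simp only: card.empty)
qed

lemma merge_step_with_neighbour:
  assumes P: "partition_on V P" "singleton_or_closed_parts V E P"
    and sym: "\<And>u v. E u v \<Longrightarrow> E v u"
    and deg: "\<And>u x y. u \<in> V \<Longrightarrow> x \<in> V \<Longrightarrow> y \<in> V \<Longrightarrow> E u x \<Longrightarrow> E u y \<Longrightarrow> x = y"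
    and s: "{s} \<in> P" and t: "t \<in> V" "E s t" "t \<noteq> s"
  shows "\<exists>Q. merge_step P Q \<and> singleton_or_closed_parts V E Q"
proof -
  note parts = P(2)[unfolded singleton_or_closed_parts_def, rule_format]
  have "s \<in> V" using s partition_onD1[OF P(1)] by blast
  obtain W where W: "W \<in> P" "t \<in> W" using t(1) partition_onD1[OF P(1)] by blast
  have "s \<notin> W"
  proof
    assume "s \<in> W"
    then have "W = {s}" using partition_on_part_unique[OF P(1) W(1) s] by simp
    then show False using W(2) t(3) by simp
  qed
  then have "\<not> adj_closed V E W"
    using W(2) \<open>s \<in> V\<close> sym[OF t(2)] unfolding adj_closed_def by blast
  then obtain t' where "W = {t'}" using parts[OF W(1)] by (elim disjE exE) simp_all
  then have "{t} \<in> P" using W by simp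
  define Q where "Q = insert ({s} \<union> {t}) (P - {{s}, {t}})"
  have "{s} \<noteq> {t}" using t(3) by simp
  then have "merge_step P Q"
    unfolding Q_def using s \<open>{t} \<in> P\<close> by (rule merge_stepI[rotated 2])
  moreover have "(\<exists>s. U = {s}) \<or> adj_closed V E U" if "U \<in> Q" for U
  proof (cases "U \<in> P")
    case True
    then show ?thesis by (rule parts)
  next
    case False
    then have "U = {s, t}" using that unfolding Q_def by auto
    then show ?thesis using adj_closed_edge[of E V s t, OF sym deg \<open>s \<in> V\<close> t(1,2)] by simp
  qed
  ultimately show ?thesis unfolding singleton_or_closed_parts_def by blast
qed

lemma merge_step_singleton_or_closed_parts:
  assumes P: "partition_on V P" "2 \<le> card P" "singleton_or_closed_parts V E P"
    and sym: "\<And>u v. E u v \<Longrightarrow> E v u"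
    and deg: "\<And>u x y. u \<in> V \<Longrightarrow> x \<in> V \<Longrightarrow> y \<in> V \<Longrightarrow> E u x \<Longrightarrow> E u y \<Longrightarrow> x = y"
  shows "\<exists>Q. merge_step P Q \<and> singleton_or_closed_parts V E Q"
proof (cases "\<exists>s. {s} \<in> P \<and> \<not> adj_closed V E {s}")
  case True
  then obtain s t where s: "{s} \<in> P" and t: "t \<in> V" "E s t" "t \<noteq> s"
    unfolding adj_closed_def by blast
  show ?thesis using merge_step_with_neighbour[of V P E s t, OF P(1,3) sym deg s t] .
next
  case False
  have closed: "adj_closed V E U" if "U \<in> P" for U
    using P(3)[unfolded singleton_or_closed_parts_def, rule_format, OF that]
  proof
    assume "\<exists>s. U = {s}"
    then obtain s where "U = {s}" ..
    then show ?thesis using False that by simp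
  qed
  obtain Q where Q: "merge_step P Q" using merge_step_exists P(2) by blast
  then have "\<forall>U\<in>Q. adj_closed V E U"
    using closed merge_step_parts[OF Q] adj_closed_Un by blast
  then show ?thesis using Q unfolding singleton_or_closed_parts_def by blast
qed

lemma contracts_within_zero_if_degree_le_one:
  assumes "finite V" "V \<noteq> {}"
    and sym: "\<And>u v. E u v \<Longrightarrow> E v u"
    and deg: "\<And>u x y. u \<in> V \<Longrightarrow> x \<in> V \<Longrightarrow> y \<in> V \<Longrightarrow> E u x \<Longrightarrow> E u y \<Longrightarrow> x = y"
  shows "contracts_within E 0 (singletons V)"
proof (rule contracts_within_by_invariant[OF assms(1,2), where \<Phi> = "singleton_or_closed_parts V E"])
  show "\<exists>Q. merge_step P Q \<and> singleton_or_closed_parts V E Q"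
    if "singleton_or_closed_parts V E P" "partition_on V P" "2 \<le> card P" for P
    using merge_step_singleton_or_closed_parts[OF that(2,3,1) sym deg] .
  show "max_red_deg E P \<le> 0" if "singleton_or_closed_parts V E P" "partition_on V P" for P
    using max_red_deg_singleton_or_closed_parts[OF assms(1) that(2,1) sym] .
  show "singleton_or_closed_parts V E (singletons V)"
    unfolding singleton_or_closed_parts_def singletons_def by auto
qed (rule partition_on_singletons_of)

definition fibre :: "('a \<Rightarrow> 'l) \<Rightarrow> 'a set \<Rightarrow> 'l \<Rightarrow> 'a set" where
  "fibre f V l = {v \<in> V. f v = l}"

definition fibre_partition :: "('a \<Rightarrow> 'l) \<Rightarrow> 'a set \<Rightarrow> 'a set set" where
  "fibre_partition f V = fibre f V ` f ` V"

lemma inj_on_fibre: "inj_on (fibre f V) (f ` V)"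
  by (rule inj_onI) (auto simp: fibre_def)

lemma fibre_partition_inj:
  assumes "inj_on f V"
  shows "fibre_partition f V = singletons V"
proof -
  have "fibre f V (f x) = {x}" if "x \<in> V" for x
    using assms that unfolding inj_on_def fibre_def by auto
  then show ?thesis
    unfolding fibre_partition_def singletons_def image_image by (intro image_cong) auto
qed

lemma merge_step_fibre_partition:
  assumes "l1 \<noteq> l2" "l1 \<in> f ` V" "l2 \<in> f ` V"
    and g: "\<And>v. v \<in> V \<Longrightarrow> g v = (if f v = l1 then l2 else f v)"
  shows "merge_step (fibre_partition f V) (fibre_partition g V)"
proof -
  let ?L = "f ` V - {l1, l2}"
  have "g ` V = insert l2 ?L"
  proof
    show "g ` V \<subseteq> insert l2 ?L" using g by auto
    show "insert l2 ?L \<subseteq> g ` V"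
    proof
      fix l assume "l \<in> insert l2 ?L"
      then obtain v where "v \<in> V" "f v = (if l = l2 then l1 else l)" using assms(2) by auto
      then show "l \<in> g ` V" using g[of v] \<open>l \<in> insert l2 ?L\<close> by (auto split: if_splits)
    qed
  qed
  moreover have "fibre g V l2 = fibre f V l1 \<union> fibre f V l2"
  proof -
    have "g v = l2 \<longleftrightarrow> f v = l1 \<or> f v = l2" if "v \<in> V" for v
      using g[OF that] assms(1) by (cases "f v = l1") simp_all
    then show ?thesis unfolding fibre_def by blast
  qed
  moreover have "fibre g V ` ?L = fibre f V ` ?L"
  proof (rule image_cong)
    fix l assume "l \<in> ?L"
    then have "g v = l \<longleftrightarrow> f v = l" if "v \<in> V" for v
      using g[OF that] by (cases "f v = l1") auto
    then show "fibre g V l = fibre f V l" unfolding fibre_def by blast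
  qed simp
  moreover have "fibre f V ` ?L = fibre_partition f V - {fibre f V l1, fibre f V l2}"
    using inj_on_image_set_diff[OF inj_on_fibre[of f V], where A = "f ` V" and B = "{l1, l2}"]
      assms(2,3)
    unfolding fibre_partition_def by simp
  moreover have "fibre f V l1 \<noteq> fibre f V l2"
    using inj_onD[OF inj_on_fibre[of f V], where x = l1 and y = l2] assms(1-3) by blast
  ultimately show ?thesis
    using merge_stepI[of "fibre f V l1" "fibre_partition f V" "fibre f V l2"] assms(2,3)
    unfolding fibre_partition_def by simp
qed

lemma red_adj_fibreE:
  assumes "red_adj E (fibre f V l) (fibre f V l')"
  obtains u x u' x' where "u \<in> V" "x \<in> V" "u' \<in> V" "x' \<in> V"
    "f u = l" "f x = l'" "f u' = l" "f x' = l'" "E u x" "\<not> E u' x'" "l \<noteq> l'"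
proof -
  obtain u x where ux: "u \<in> fibre f V l" "x \<in> fibre f V l'" "E u x"
    using assms unfolding red_adj_def by blast
  obtain u' x' where ux': "u' \<in> fibre f V l" "x' \<in> fibre f V l'" "\<not> E u' x'"
    using assms unfolding red_adj_def by blast
  have "l \<noteq> l'" using assms unfolding red_adj_def by blast
  with ux ux' show thesis unfolding fibre_def by (intro that[of u x u' x']) simp_all
qed

lemma max_red_deg_fibre_partition_le:
  assumes "finite V"
    and card: "\<And>l. l \<in> f ` V \<Longrightarrow> finite (C l) \<and> card (C l) \<le> w"
    and red: "\<And>l l'. l \<in> f ` V \<Longrightarrow> l' \<in> f ` V
      \<Longrightarrow> red_adj E (fibre f V l) (fibre f V l') \<Longrightarrow> l' \<in> C l"
  shows "max_red_deg E (fibre_partition f V) \<le> w"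
proof (rule max_red_deg_le)
  show "finite (fibre_partition f V)" using assms(1) unfolding fibre_partition_def by simp
  fix U assume "U \<in> fibre_partition f V"
  then obtain l where l: "l \<in> f ` V" "U = fibre f V l" unfolding fibre_partition_def by blast
  have "{W \<in> fibre_partition f V. red_adj E U W} \<subseteq> fibre f V ` C l"
    using red l unfolding fibre_partition_def by auto
  then have "red_deg E (fibre_partition f V) U \<le> card (fibre f V ` C l)"
    unfolding red_deg_def using card[OF l(1)] by (intro card_mono) auto
  also have "\<dots> \<le> card (C l)" by (rule card_image_le) (use card[OF l(1)] in blast)
  finally show "red_deg E (fibre_partition f V) U \<le> w" using card[OF l(1)] by linarith
qed

lemma kneser2_V_iff: "S \<in> kneser2_V n \<longleftrightarrow> (\<exists>a b. S = {a, b} \<and> 1 \<le> a \<and> a < b \<and> b \<le> n)"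
proof
  assume "S \<in> kneser2_V n"
  then have S: "S \<subseteq> {1..n}" "card S = 2" unfolding kneser2_V_def by auto
  then obtain x y where xy: "S = {x, y}" "x \<noteq> y" by (meson card_2_iff)
  show "\<exists>a b. S = {a, b} \<and> 1 \<le> a \<and> a < b \<and> b \<le> n"
  proof (cases "x < y")
    case True
    then show ?thesis using xy S by (intro exI[of _ x] exI[of _ y]) auto
  next
    case False
    then show ?thesis using xy S by (intro exI[of _ y] exI[of _ x]) auto
  qed
next
  assume "\<exists>a b. S = {a, b} \<and> 1 \<le> a \<and> a < b \<and> b \<le> n"
  then show "S \<in> kneser2_V n" unfolding kneser2_V_def by auto
qed

lemma kneser2_VE:
  assumes "S \<in> kneser2_V n"
  obtains a b where "S = {a, b}" "1 \<le> a" "a < b" "b \<le> n"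
  using assms kneser2_V_iff by blast

lemma finite_kneser2_V: "finite (kneser2_V n)"
  by (rule finite_subset[of _ "Pow {1..n}"]) (auto simp: kneser2_V_def)

lemma kneser2_V_not_empty:
  assumes "2 \<le> n"
  shows "kneser2_V n \<noteq> {}"
proof -
  have "{1, 2} \<in> kneser2_V n" using assms unfolding kneser2_V_def by auto
  then show ?thesis by blast
qed

lemma two_le_card_kneser2_V:
  assumes "3 \<le> n"
  shows "2 \<le> card (kneser2_V n)"
proof -
  have "{{1, 2}, {1, 3}} \<subseteq> kneser2_V n" using assms unfolding kneser2_V_def by auto
  then have "card {{1::nat, 2}, {1, 3}} \<le> card (kneser2_V n)"
    using finite_kneser2_V by (rule card_mono[rotated])
  then show ?thesis by (simp add: doubleton_eq_iff)
qed

lemma kneser2_E_sym: "kneser2_E S T \<Longrightarrow> kneser2_E T S"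
  unfolding kneser2_E_def by auto

lemma kneser2_neighbour_eq_compl:
  assumes "n \<le> 4" "u \<in> kneser2_V n" "x \<in> kneser2_V n" "kneser2_E u x"
  shows "x = {1..n} - u"
proof (rule card_subset_eq)
  have u: "u \<subseteq> {1..n}" "card u = 2" and x: "x \<subseteq> {1..n}" "card x = 2"
    using assms(2,3) unfolding kneser2_V_def by auto
  show "finite ({1..n} - u)" by simp
  show "x \<subseteq> {1..n} - u" using x(1) assms(4) unfolding kneser2_E_def by auto
  then have "card x \<le> card ({1..n} - u)" by (intro card_mono) auto
  moreover have "card ({1..n} - u) = n - 2"
    using u by (simp add: card_Diff_subset finite_subset)
  ultimately show "card x = card ({1..n} - u)" using assms(1) x(2) by linarith
qed

lemma red_adj_doubleton_singleton:
  "red_adj E {u, v} {w} \<longleftrightarrow> {u, v} \<noteq> {w} \<and> E u w \<noteq> E v w"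
  unfolding red_adj_def by auto

lemma kneser2_pair_partition_red_deg_ge:
  assumes uv: "u \<in> kneser2_V n" "v \<in> kneser2_V n" "u \<noteq> v"
  shows "card (sym_diff u v) * (n - card (u \<union> v))
    \<le> red_deg kneser2_E (pair_partition (kneser2_V n) u v) {u, v}"
proof -
  let ?P = "pair_partition (kneser2_V n) u v"
  let ?Y = "sym_diff u v" and ?X = "{1..n} - (u \<union> v)"
  let ?f = "\<lambda>(y, x). {{y, x}}"
  have sub: "u \<union> v \<subseteq> {1..n}" using uv(1,2) unfolding kneser2_V_def by auto
  have fin: "finite (u \<union> v)" using sub finite_subset by blast
  have "inj_on ?f (?Y \<times> ?X)"
    by (rule inj_onI) (auto simp: doubleton_eq_iff)
  then have card_image: "card (?f ` (?Y \<times> ?X)) = card ?Y * (n - card (u \<union> v))"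
    using sub fin by (simp add: card_image card_cartesian_product card_Diff_subset)
  have "{{y, x}} \<in> ?P \<and> red_adj kneser2_E {u, v} {{y, x}}" if y: "y \<in> ?Y" and x: "x \<in> ?X"
    for y x
  proof -
    have "y \<noteq> x" using y x by blast
    then have "{y, x} \<in> kneser2_V n" using y x sub unfolding kneser2_V_def by auto
    moreover have "{y, x} \<noteq> u" "{y, x} \<noteq> v" using x by auto
    ultimately have "{{y, x}} \<in> ?P" unfolding pair_partition_def singletons_def by auto
    moreover have "kneser2_E u {y, x} \<noteq> kneser2_E v {y, x}"
      using y x \<open>{y, x} \<noteq> u\<close> \<open>{y, x} \<noteq> v\<close> unfolding kneser2_E_def by auto
    moreover have "{u, v} \<noteq> {{y, x}}" using uv(3) by (auto simp: doubleton_eq_iff)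
    ultimately show ?thesis by (simp add: red_adj_doubleton_singleton)
  qed
  then have "?f ` (?Y \<times> ?X) \<subseteq> {W \<in> ?P. red_adj kneser2_E {u, v} W}" by auto
  moreover have "finite ?P"
    using finite_kneser2_V unfolding pair_partition_def singletons_def by simp
  ultimately have "card (?f ` (?Y \<times> ?X)) \<le> red_deg kneser2_E ?P {u, v}"
    unfolding red_deg_def by (intro card_mono) auto
  then show ?thesis using card_image by simp
qed

lemma card_sym_diff_mult_ge:
  assumes "finite u" "finite v" "card u = 2" "card v = 2" "u \<noteq> v" "5 \<le> n"
  shows "2 * (n - 3) \<le> card (sym_diff u v) * (n - card (u \<union> v))"
proof -
  have "card (u \<inter> v) \<noteq> 2"
  proof
    assume "card (u \<inter> v) = 2"
    then have "u \<inter> v = u" "u \<inter> v = v"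
      using assms(1-4) by (metis Int_lower1 Int_lower2 card_subset_eq)+
    then show False using assms(5) by simp
  qed
  moreover have "card (u \<inter> v) \<le> 2" using assms(1,3) card_mono[of u "u \<inter> v"] by simp
  ultimately have k: "card (u \<inter> v) = 0 \<or> card (u \<inter> v) = 1" by linarith
  have union: "card (u \<union> v) + card (u \<inter> v) = 4"
    using assms(1-4) card_Un_Int[of u v] by simp
  have "sym_diff u v = (u \<union> v) - (u \<inter> v)" by blast
  then have sym_diff: "card (sym_diff u v) = card (u \<union> v) - card (u \<inter> v)"
    using card_Diff_subset[of "u \<inter> v" "u \<union> v"] assms(1) by auto
  from k show ?thesis
  proof
    assume "card (u \<inter> v) = 0"
    then show ?thesis using union sym_diff assms(6) by simp
  next
    assume "card (u \<inter> v) = 1"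
    then show ?thesis using union sym_diff by simp
  qed
qed

lemma kneser2_pair_partition_width_ge:
  assumes "5 \<le> n" "u \<in> kneser2_V n" "v \<in> kneser2_V n" "u \<noteq> v"
  shows "2 * (n - 3) \<le> max_red_deg kneser2_E (pair_partition (kneser2_V n) u v)"
proof -
  have "finite u" "card u = 2" "finite v" "card v = 2"
    using assms(2,3) unfolding kneser2_V_def by (auto intro: finite_subset)
  then have "2 * (n - 3) \<le> card (sym_diff u v) * (n - card (u \<union> v))"
    using assms(4,1) by (intro card_sym_diff_mult_ge)
  also have "\<dots> \<le> red_deg kneser2_E (pair_partition (kneser2_V n) u v) {u, v}"
    using assms(2-4) by (rule kneser2_pair_partition_red_deg_ge)
  also have "\<dots> \<le> max_red_deg kneser2_E (pair_partition (kneser2_V n) u v)"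
    using finite_kneser2_V
    by (intro red_deg_le_max_red_deg) (simp_all add: pair_partition_def singletons_def)
  finally show ?thesis .
qed

lemma lb1_kneser2_ge:
  assumes "5 \<le> n"
  shows "2 * (n - 3) \<le> lb1 (kneser2_V n) kneser2_E"
  using finite_kneser2_V two_le_card_kneser2_V kneser2_pair_partition_width_ge assms
  by (intro le_lb1I) auto

lemma tww_kneser2_eq_0:
  assumes "2 \<le> n" "n \<le> 4"
  shows "tww (kneser2_V n) kneser2_E = 0"
proof -
  have "contracts_within kneser2_E 0 (singletons (kneser2_V n))"
    using finite_kneser2_V kneser2_V_not_empty[OF assms(1)]
  proof (rule contracts_within_zero_if_degree_le_one)
    show "kneser2_E u v \<Longrightarrow> kneser2_E v u" for u v by (rule kneser2_E_sym)
    fix u x y assume u: "u \<in> kneser2_V n" and x: "x \<in> kneser2_V n" and y: "y \<in> kneser2_V n"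
      and "kneser2_E u x" "kneser2_E u y"
    then show "x = y"
      using kneser2_neighbour_eq_compl[OF assms(2) u x] kneser2_neighbour_eq_compl[OF assms(2) u y]
      by simp
  qed
  then have "tww (kneser2_V n) kneser2_E \<le> 0"
    using finite_kneser2_V by (intro tww_le_if_contracts_within)
  then show ?thesis by simp
qed

datatype part_label = Single nat nat | Star nat | Top

definition stage_label :: "nat \<Rightarrow> nat set \<Rightarrow> nat \<Rightarrow> nat \<Rightarrow> part_label" where
  "stage_label m D a b =
     (if m \<le> a then Top else if b < m \<or> (b = m \<and> a \<notin> D) then Single a b else Star a)"

definition pair_stage_label :: "nat \<Rightarrow> nat set \<Rightarrow> nat set \<Rightarrow> part_label" where
  "pair_stage_label m D S = stage_label m D (Min S) (Max S)"

definition kneser_stage :: "nat \<Rightarrow> nat \<Rightarrow> nat set \<Rightarrow> nat set set set" where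
  "kneser_stage n m D = fibre_partition (pair_stage_label m D) (kneser2_V n)"

definition is_kneser_stage :: "nat \<Rightarrow> nat set set set \<Rightarrow> bool" where
  "is_kneser_stage n P \<longleftrightarrow> (\<exists>m D. 2 \<le> m \<and> m < n \<and> D \<subseteq> {1..<m} \<and> P = kneser_stage n m D)"

(* For m = n - 1 the part Top is the single pair {n - 1, n}, which meets every pair in a star
   and every singleton {j, m}, so it has no red edges. *)

definition red_candidates :: "nat \<Rightarrow> nat \<Rightarrow> part_label \<Rightarrow> part_label set" where
  "red_candidates n m l = (case l of
      Single a b \<Rightarrow> if b < m then {} else Star ` {1..<m} \<union> {Top}
    | Star i \<Rightarrow> Star ` ({1..<m} - {i}) \<union> (\<lambda>j. Single j m) ` ({1..<m} - {i})
        \<union> (if m + 2 \<le> n then {Top} else {})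
    | Top \<Rightarrow> if m + 2 \<le> n then Star ` {1..<m} \<union> (\<lambda>j. Single j m) ` {1..<m} else {})"

lemma pair_stage_label_doubleton [simp]:
  "a < b \<Longrightarrow> pair_stage_label m D {a, b} = stage_label m D a b"
  unfolding pair_stage_label_def by simp

lemma stage_label_in_image:
  "1 \<le> a \<Longrightarrow> a < b \<Longrightarrow> b \<le> n \<Longrightarrow> stage_label m D a b \<in> pair_stage_label m D ` kneser2_V n"
  by (rule image_eqI[of _ _ "{a, b}"]) (auto simp: kneser2_V_iff)

lemma stage_red_candidate:
  assumes "2 \<le> m" "m < n" "D \<subseteq> {1..<m}"
    and "1 \<le> a" "a < b" "b \<le> n" "1 \<le> c" "c < d" "d \<le> n"
    and "1 \<le> a'" "a' < b'" "b' \<le> n" "1 \<le> c'" "c' < d'" "d' \<le> n"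
    and "stage_label m D a' b' = stage_label m D a b"
    and "stage_label m D c' d' = stage_label m D c d"
    and "{a, b} \<inter> {c, d} = {}" "{a', b'} \<inter> {c', d'} \<noteq> {}"
    and "stage_label m D a b \<noteq> stage_label m D c d"
  shows "stage_label m D c d \<in> red_candidates n m (stage_label m D a b)"
  using assms by (auto simp: stage_label_def red_candidates_def split: if_splits)

lemma finite_red_candidates: "finite (red_candidates n m l)"
  by (simp add: red_candidates_def split: part_label.split)

lemma card_two_images_Un_le:
  assumes "finite A"
  shows "card (f ` A \<union> g ` A \<union> T) \<le> 2 * card A + card T"
proof -
  have "card (f ` A \<union> g ` A \<union> T) \<le> card (f ` A) + card (g ` A) + card T"
    by (meson add_mono card_Un_le le_refl order_trans)
  also have "\<dots> \<le> 2 * card A + card T"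
    using card_image_le[OF assms, of f] card_image_le[OF assms, of g] by simp
  finally show ?thesis .
qed

lemma card_red_candidates_le:
  assumes "5 \<le> n" "2 \<le> m" "m < n" "1 \<le> a" "a < b"
  shows "card (red_candidates n m (stage_label m D a b)) \<le> 2 * (n - 3)"
proof (cases "stage_label m D a b")
  case (Single x y)
  have "card (Star ` {1..<m} \<union> {Top}) \<le> card (Star ` {1..<m}) + card {Top}"
    by (rule card_Un_le)
  also have "\<dots> \<le> m" using card_image_le[of "{1..<m}" Star] assms(2) by simp
  also have "\<dots> \<le> 2 * (n - 3)" using assms(1,3) by linarith
  finally show ?thesis using Single by (simp add: red_candidates_def)
next
  case (Star i)
  then have "i = a" "a < m" by (auto simp: stage_label_def split: if_splits)
  then have "card ({1..<m} - {i}) = m - 2" using assms by simp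
  moreover have "card (red_candidates n m (Star i))
      \<le> 2 * card ({1..<m} - {i}) + card (if m + 2 \<le> n then {Top} else {})"
    unfolding red_candidates_def part_label.case by (rule card_two_images_Un_le) simp
  ultimately show ?thesis using Star assms by (simp split: if_splits)
next
  case Top
  have "card (Star ` {1..<m} \<union> (\<lambda>j. Single j m) ` {1..<m}) \<le> 2 * (m - 1)"
    using card_two_images_Un_le[of "{1..<m}" Star "\<lambda>j. Single j m" "{}"] by simp
  then show ?thesis using Top assms by (auto simp: red_candidates_def)
qed

lemma kneser_stage_width:
  assumes "5 \<le> n" "2 \<le> m" "m < n" "D \<subseteq> {1..<m}"
  shows "max_red_deg kneser2_E (kneser_stage n m D) \<le> 2 * (n - 3)"
  unfolding kneser_stage_def
proof (rule max_red_deg_fibre_partition_le[OF finite_kneser2_V, where C = "red_candidates n m"])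
  fix l assume "l \<in> pair_stage_label m D ` kneser2_V n"
  then obtain a b where "1 \<le> a" "a < b" "l = stage_label m D a b"
    by (auto elim: kneser2_VE)
  then show "finite (red_candidates n m l) \<and> card (red_candidates n m l) \<le> 2 * (n - 3)"
    using card_red_candidates_le assms(1-3) finite_red_candidates by blast
next
  fix l l'
  assume "red_adj kneser2_E (fibre (pair_stage_label m D) (kneser2_V n) l)
      (fibre (pair_stage_label m D) (kneser2_V n) l')"
  then obtain u x u' x'
    where V: "u \<in> kneser2_V n" "x \<in> kneser2_V n" "u' \<in> kneser2_V n" "x' \<in> kneser2_V n"
      and lab: "pair_stage_label m D u = l" "pair_stage_label m D x = l'"
        "pair_stage_label m D u' = l" "pair_stage_label m D x' = l'"
      and "kneser2_E u x" "\<not> kneser2_E u' x'" "l \<noteq> l'"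
    by (rule red_adj_fibreE)
  then have disj: "u \<inter> x = {}" "u' \<inter> x' \<noteq> {}" unfolding kneser2_E_def by auto
  obtain a b where ab: "u = {a, b}" "1 \<le> a" "a < b" "b \<le> n" using V(1) by (rule kneser2_VE)
  obtain c d where cd: "x = {c, d}" "1 \<le> c" "c < d" "d \<le> n" using V(2) by (rule kneser2_VE)
  obtain a' b' where ab': "u' = {a', b'}" "1 \<le> a'" "a' < b'" "b' \<le> n"
    using V(3) by (rule kneser2_VE)
  obtain c' d' where cd': "x' = {c', d'}" "1 \<le> c'" "c' < d'" "d' \<le> n"
    using V(4) by (rule kneser2_VE)
  have "stage_label m D c d \<in> red_candidates n m (stage_label m D a b)"
    by (rule stage_red_candidate[OF assms(2-4) ab(2-4) cd(2-4) ab'(2-4) cd'(2-4)])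
      (use lab disj \<open>l \<noteq> l'\<close> ab cd ab' cd' in simp_all)
  then show "l' \<in> red_candidates n m l" using lab ab cd by simp
qed

lemma kneser_stage_initial:
  assumes "2 \<le> n"
  shows "kneser_stage n (n - 1) {} = singletons (kneser2_V n)"
  unfolding kneser_stage_def
proof (intro fibre_partition_inj inj_onI)
  fix S T assume "S \<in> kneser2_V n" "T \<in> kneser2_V n"
    and "pair_stage_label (n - 1) {} S = pair_stage_label (n - 1) {} T"
  then show "S = T"
    by (elim kneser2_VE) (auto simp: stage_label_def split: if_splits)
qed

lemma merge_step_kneser_stage:
  assumes "1 \<le> a" "a < b" "b \<le> n" "1 \<le> c" "c < d" "d \<le> n"
    and "stage_label m D a b \<noteq> stage_label m D c d"
    and relabel: "\<And>x y. 1 \<le> x \<Longrightarrow> x < y \<Longrightarrow> y \<le> n \<Longrightarrow> stage_label m' D' x y =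
      (if stage_label m D x y = stage_label m D a b then stage_label m D c d
       else stage_label m D x y)"
  shows "merge_step (kneser_stage n m D) (kneser_stage n m' D')"
  unfolding kneser_stage_def
proof (rule merge_step_fibre_partition)
  show "stage_label m D a b \<in> pair_stage_label m D ` kneser2_V n"
    "stage_label m D c d \<in> pair_stage_label m D ` kneser2_V n"
    using assms(1-6) by (simp_all add: stage_label_in_image)
  fix v assume "v \<in> kneser2_V n"
  then show "pair_stage_label m' D' v = (if pair_stage_label m D v = stage_label m D a b
      then stage_label m D c d else pair_stage_label m D v)"
    using relabel by (elim kneser2_VE) simp
qed (rule assms(7))

lemma merge_step_kneser_stage_insert:
  assumes "2 \<le> m" "m < n" "i \<in> {1..<m}" "i \<notin> D"
  shows "merge_step (kneser_stage n m D) (kneser_stage n m (insert i D))"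
  by (rule merge_step_kneser_stage[where a = i and b = m and c = i and d = n])
    (use assms in \<open>auto simp: stage_label_def\<close>)

lemma merge_step_kneser_stage_next:
  assumes "3 \<le> m" "m < n"
  shows "merge_step (kneser_stage n m {1..<m}) (kneser_stage n (m - 1) {})"
  by (rule merge_step_kneser_stage[where a = "m - 1" and b = n and c = m and d = n])
    (use assms in \<open>auto simp: stage_label_def\<close>)

lemma merge_step_kneser_stage_successor:
  assumes "3 \<le> m" "m < n" "D \<subseteq> {1..<m}"
  shows "\<exists>Q. merge_step (kneser_stage n m D) Q \<and> is_kneser_stage n Q"
proof (cases "D = {1..<m}")
  case True
  have "is_kneser_stage n (kneser_stage n (m - 1) {})"
    unfolding is_kneser_stage_def using assms(1,2)
    by (intro exI[of _ "m - 1"] exI[of _ "{}"]) auto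
  then show ?thesis using merge_step_kneser_stage_next[OF assms(1,2)] True by blast
next
  case False
  then obtain i where i: "i \<in> {1..<m}" "i \<notin> D" using assms(3) by blast
  have "is_kneser_stage n (kneser_stage n m (insert i D))"
    unfolding is_kneser_stage_def using assms i
    by (intro exI[of _ m] exI[of _ "insert i D"]) simp
  moreover have "merge_step (kneser_stage n m D) (kneser_stage n m (insert i D))"
    using assms(1,2) i by (intro merge_step_kneser_stage_insert) simp_all
  ultimately show ?thesis by blast
qed

lemma card_kneser_stage_two: "card (kneser_stage n 2 D) \<le> 3"
proof -
  have labels: "stage_label 2 D a b \<in> {Single 1 2, Star 1, Top}" if "1 \<le> a" "a < b" for a b
  proof (cases "2 \<le> a")
    case False
    then have "a = 1" using that(1) by simp
    then show ?thesis using that(2) by (auto simp: stage_label_def)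
  qed (simp add: stage_label_def)
  have "pair_stage_label 2 D ` kneser2_V n \<subseteq> {Single 1 2, Star 1, Top}"
  proof (rule image_subsetI)
    fix S assume "S \<in> kneser2_V n"
    then obtain a b where "S = {a, b}" "1 \<le> a" "a < b" by (elim kneser2_VE)
    then show "pair_stage_label 2 D S \<in> {Single 1 2, Star 1, Top}" using labels by simp
  qed
  then have "card (pair_stage_label 2 D ` kneser2_V n) \<le> card {Single 1 2, Star 1, Top}"
    by (rule card_mono[rotated]) simp
  also have "\<dots> = 3" by simp
  finally have "card (pair_stage_label 2 D ` kneser2_V n) \<le> 3" .
  moreover have "card (kneser_stage n 2 D) \<le> card (pair_stage_label 2 D ` kneser2_V n)"
    unfolding kneser_stage_def fibre_partition_def
    by (rule card_image_le) (simp add: finite_kneser2_V)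
  ultimately show ?thesis by linarith
qed

lemma merge_step_kneser_stage_or_few_parts:
  assumes P: "is_kneser_stage n P \<or> card P \<le> 3" "partition_on (kneser2_V n) P" "2 \<le> card P"
  shows "\<exists>Q. merge_step P Q \<and> (is_kneser_stage n Q \<or> card Q \<le> 3)"
proof (cases "card P \<le> 3")
  case True
  obtain Q where Q: "merge_step P Q" using merge_step_exists P(3) by blast
  have "finite P" using finite_kneser2_V P(2) by (rule finite_elements)
  then have "card Q \<le> 3" using card_merge_step[OF P(2) _ Q] True by simp
  then show ?thesis using Q by blast
next
  case False
  then obtain m D where m: "2 \<le> m" "m < n" "D \<subseteq> {1..<m}" and P_eq: "P = kneser_stage n m D"
    using P(1) unfolding is_kneser_stage_def by blast
  have "m \<noteq> 2"
  proof
    assume "m = 2"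
    then have "card P \<le> 3" using P_eq card_kneser_stage_two by simp
    then show False using False by simp
  qed
  then have "3 \<le> m" using m(1) by simp
  then show ?thesis using merge_step_kneser_stage_successor[OF _ m(2,3)] P_eq by blast
qed

lemma max_red_deg_kneser_stage_or_few_parts:
  assumes "5 \<le> n" "is_kneser_stage n P \<or> card P \<le> 3" "partition_on (kneser2_V n) P"
  shows "max_red_deg kneser2_E P \<le> 2 * (n - 3)"
proof (cases "card P \<le> 3")
  case True
  have "finite P" using finite_kneser2_V assms(3) by (rule finite_elements)
  then show ?thesis using max_red_deg_le_card[of P kneser2_E] True assms(1) by linarith
next
  case False
  then obtain m D where "2 \<le> m" "m < n" "D \<subseteq> {1..<m}" "P = kneser_stage n m D"
    using assms(2) unfolding is_kneser_stage_def by blast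
  then show ?thesis using kneser_stage_width[OF assms(1)] by simp
qed

lemma kneser2_contracts_within:
  assumes "5 \<le> n"
  shows "contracts_within kneser2_E (2 * (n - 3)) (singletons (kneser2_V n))"
proof -
  have "kneser2_V n \<noteq> {}" using assms by (intro kneser2_V_not_empty) simp
  then show ?thesis
  proof (rule contracts_within_by_invariant[OF finite_kneser2_V,
        where \<Phi> = "\<lambda>P. is_kneser_stage n P \<or> card P \<le> 3"])
    show "\<exists>Q. merge_step P Q \<and> (is_kneser_stage n Q \<or> card Q \<le> 3)"
      if "is_kneser_stage n P \<or> card P \<le> 3" "partition_on (kneser2_V n) P" "2 \<le> card P" for P
      using that by (rule merge_step_kneser_stage_or_few_parts)
    show "max_red_deg kneser2_E P \<le> 2 * (n - 3)"
      if "is_kneser_stage n P \<or> card P \<le> 3" "partition_on (kneser2_V n) P" for P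
      using assms that by (rule max_red_deg_kneser_stage_or_few_parts)
    have "is_kneser_stage n (singletons (kneser2_V n))"
      unfolding is_kneser_stage_def using kneser_stage_initial[of n] assms
      by (intro exI[of _ "n - 1"] exI[of _ "{}"]) simp
    then show "is_kneser_stage n (singletons (kneser2_V n)) \<or> card (singletons (kneser2_V n)) \<le> 3"
      ..
  qed (rule partition_on_singletons_of)
qed

theorem mainTheorem7:
  fixes n :: nat
  assumes "n \<ge> 2"
  shows "tww (kneser2_V n) kneser2_E = lb1 (kneser2_V n) kneser2_E
       \<and> tww (kneser2_V n) kneser2_E = (if n \<ge> 5 then 2 * (n - 3) else 0)"
proof -
  have lb1_le: "lb1 (kneser2_V n) kneser2_E \<le> tww (kneser2_V n) kneser2_E"
    using finite_kneser2_V kneser2_V_not_empty[OF assms] by (rule lb1_le_tww)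
  show ?thesis
  proof (cases "n \<ge> 5")
    case True
    have "tww (kneser2_V n) kneser2_E \<le> 2 * (n - 3)"
      using finite_kneser2_V kneser2_contracts_within[OF True] by (rule tww_le_if_contracts_within)
    then show ?thesis using lb1_le lb1_kneser2_ge[OF True] True by simp
  next
    case False
    then show ?thesis using lb1_le tww_kneser2_eq_0[OF assms] by simp
  qed
qed

end
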